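(* If $T$ and $T'$ are standard tableaux such that $(T,T')$ is a pair of type $D_j(i)$ for some $i\ge1$ and $1\le j\le4$, then $\digamma(T)=q\,\digamma(T')$.
   Context: Tableaux (French convention: rows of lengths $\lambda_1\ge\lambda_2\ge\cdots$ from bottom to top). A tableau is identified with (shape, reading word), the reading word listing the entries row by row from top row to bottom row, each row left to right. Standard tableau of degree $n$: rows increase left to right, columns increase upwards, entries $1,\dots,n$ each once. Cocharge of a standard word $w$ of degree $n$: $c_1=0$, $c_{i+1}=c_i+1$ if $i+1$ is left of $i$ in $w$, else $c_{i+1}=c_i$; $\mathrm{cocharge}(w)=\sum c_i$; the cocharge of a standard tableau is that of its reading word. With $b=a+1$, $c=a+2$, $d=a+3$: $D_1(a)=(bacd,cabd)$, $D_2(a)=(dbac,dcab)$, $D_3(a)=(acdb,abdc)$, $D_4(a)=(cdba,bdca)$. A pair $(T_1,T_2)$ of tableaux is of type $D_j(a)$ if $T_1$ is obtained from $T_2$ by exchanging the letters $b$ and $c$, and the pair of subwords of the reading words of $T_1$ and $T_2$ formed by the letters $a,b,c,d$ equals $D_j(a)$. Plethystic notation: $X=x_1+\cdots+x_N$, $X^t=X(1-t)$, and $S_\mu[X^t]$ is the Schur function with $p_k$ replaced by $p_k[X](1-t^k)$. $\digamma$ sends a standard tableau $T$ to $q^{\mathrm{cocharge}(T)}S_{\mathrm{shape}(T)}[X^t]$. *)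

theory Defs
  imports Complex_Main "HOL-Combinatorics.Permutations"
begin

text \<open>The shape lists the row lengths
  lambda_1 >= lambda_2 >= ... from the bottom row (index 0) upwards; the reading word
  lists the rows from the top row down to the bottom row, each row left to right.\<close>

type_synonym tableau = "nat list \<times> nat list"

definition shape :: "tableau \<Rightarrow> nat list" where "shape T = fst T"
definition rword :: "tableau \<Rightarrow> nat list" where "rword T = snd T"

definition is_partition :: "nat list \<Rightarrow> bool" where
  "is_partition la \<longleftrightarrow> sorted_wrt (\<ge>) la \<and> (\<forall>k \<in> set la. 0 < k)"

definition row_offset :: "nat list \<Rightarrow> nat \<Rightarrow> nat" where
  "row_offset la r = sum_list (drop (Suc r) la)"

text \<open>Entry in row r (from bottom), column c (from left), both 0-based.\<close>
definition entry :: "tableau \<Rightarrow> nat \<Rightarrow> nat \<Rightarrow> nat" where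
  "entry T r c = rword T ! (row_offset (shape T) r + c)"

definition standard :: "tableau \<Rightarrow> bool" where
  "standard T \<longleftrightarrow>
     is_partition (shape T) \<and>
     length (rword T) = sum_list (shape T) \<and>
     distinct (rword T) \<and> set (rword T) = {1..length (rword T)} \<and>
     (\<forall>r c. r < length (shape T) \<and> Suc c < shape T ! r \<longrightarrow> entry T r c < entry T r (Suc c)) \<and>
     (\<forall>r c. Suc r < length (shape T) \<and> c < shape T ! Suc r \<longrightarrow> entry T r c < entry T (Suc r) c)"

definition pos :: "nat list \<Rightarrow> nat \<Rightarrow> nat" where
  "pos w a = (LEAST k. k < length w \<and> w ! k = a)"

fun cc :: "nat list \<Rightarrow> nat \<Rightarrow> nat" where
  "cc w 0 = 0"
| "cc w (Suc 0) = 0"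
| "cc w (Suc (Suc i)) = cc w (Suc i) + (if pos w (Suc (Suc i)) < pos w (Suc i) then 1 else 0)"

definition cocharge_word :: "nat list \<Rightarrow> nat" where
  "cocharge_word w = (\<Sum>i = 1..length w. cc w i)"

definition cocharge :: "tableau \<Rightarrow> nat" where
  "cocharge T = cocharge_word (rword T)"

definition D :: "nat \<Rightarrow> nat \<Rightarrow> nat list \<times> nat list" where
  "D j a = (let b = a + 1; c = a + 2; d = a + 3 in
     if j = 1 then ([b,a,c,d], [c,a,b,d])
     else if j = 2 then ([d,b,a,c], [d,c,a,b])
     else if j = 3 then ([a,c,d,b], [a,b,d,c])
     else ([c,d,b,a], [b,d,c,a]))"

definition swap_letters :: "nat \<Rightarrow> nat \<Rightarrow> nat \<Rightarrow> nat" where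
  "swap_letters b c x = (if x = b then c else if x = c then b else x)"

definition subword :: "nat \<Rightarrow> nat list \<Rightarrow> nat list" where
  "subword a w = filter (\<lambda>x. a \<le> x \<and> x \<le> a + 3) w"

definition pair_of_type :: "nat \<Rightarrow> nat \<Rightarrow> tableau \<Rightarrow> tableau \<Rightarrow> bool" where
  "pair_of_type j a T1 T2 \<longleftrightarrow>
     shape T1 = shape T2 \<and>
     rword T1 = map (swap_letters (a + 1) (a + 2)) (rword T2) \<and>
     (subword a (rword T1), subword a (rword T2)) = D j a"

definition h_sym :: "nat \<Rightarrow> (nat \<Rightarrow> real) \<Rightarrow> nat \<Rightarrow> real" where
  "h_sym N x k = (\<Sum>a \<in> {a :: nat \<Rightarrow> nat. (\<forall>i. N \<le> i \<longrightarrow> a i = 0) \<and> (\<Sum>i<N. a i) = k}.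
                    \<Prod>i<N. x i ^ a i)"

definition e_sym :: "nat \<Rightarrow> (nat \<Rightarrow> real) \<Rightarrow> nat \<Rightarrow> real" where
  "e_sym N x k = (\<Sum>S \<in> {S. S \<subseteq> {..<N} \<and> card S = k}. \<Prod>i\<in>S. x i)"

text \<open>h_k[X(1-t)] = sum_j h_{k-j}[X] (-t)^j e_j[X]; zero for k < 0.\<close>
definition h_pleth :: "nat \<Rightarrow> (nat \<Rightarrow> real) \<Rightarrow> real \<Rightarrow> int \<Rightarrow> real" where
  "h_pleth N x t k = (if k < 0 then 0 else
     (\<Sum>j \<le> nat k. h_sym N x (nat k - j) * (- t) ^ j * e_sym N x j))"

text \<open>Jacobi--Trudi: S_mu[X^t] = det (h_{mu_i - i + j}[X^t]).\<close>
definition schur_pleth :: "nat list \<Rightarrow> nat \<Rightarrow> (nat \<Rightarrow> real) \<Rightarrow> real \<Rightarrow> real" where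
  "schur_pleth mu N x t =
     (\<Sum>p | p permutes {..<length mu}. of_int (sign p) *
        (\<Prod>i<length mu. h_pleth N x t (int (mu ! i) - int i + int (p i))))"

definition digamma :: "tableau \<Rightarrow> nat \<Rightarrow> (nat \<Rightarrow> real) \<Rightarrow> real \<Rightarrow> real \<Rightarrow> real" where
  "digamma T N x q t = q ^ cocharge T * schur_pleth (shape T) N x t"

end

theory Submission
  imports Defs
begin

text \<open>The shapes agree, so only the cocharges matter. The sequence \<open>c\<^sub>k\<close> increases
  exactly after the inverse descents of the reading word, i.e. the letters \<open>m\<close> with
  \<open>m + 1\<close> to the left of \<open>m\<close>. Exchanging \<open>b\<close> and \<open>c\<close> can only change the inverse
  descents at \<open>a\<close>, \<open>b\<close> and \<open>c\<close>, which are read off the subwords \<open>D\<^sub>j(a)\<close>: in all four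
  types, passing from \<open>T\<close> to \<open>T'\<close> moves one inverse descent from \<open>e - 1\<close> to \<open>e\<close>
  (\<open>e = b\<close> for \<open>j \<le> 2\<close>, \<open>e = c\<close> otherwise). Hence \<open>c\<^sub>k\<close> drops by one at \<open>k = e\<close> and
  nowhere else, and the cocharge drops by one.\<close>

definition inverse_descent :: "nat list \<Rightarrow> nat \<Rightarrow> bool" where
  "inverse_descent w m \<longleftrightarrow> pos w (Suc m) < pos w m"

definition inverse_descents :: "nat list \<Rightarrow> nat set" where
  "inverse_descents w = {m. inverse_descent w m}"

lemma cc_Suc_Suc: "cc w (Suc (Suc i)) = cc w (Suc i) + of_bool (inverse_descent w (Suc i))"
  by (simp add: inverse_descent_def)

lemma pos_Cons:
  assumes "x \<in> set (z # w)"
  shows "pos (z # w) x = (if z = x then 0 else Suc (pos w x))"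
proof (cases "z = x")
  case True
  then show ?thesis unfolding pos_def by (intro Least_equality) auto
next
  case False
  with assms obtain k where k: "k < length w" "w ! k = x" by (auto simp: in_set_conv_nth)
  have "(LEAST n. n < length (z # w) \<and> (z # w) ! n = x)
      = Suc (LEAST m. Suc m < length (z # w) \<and> (z # w) ! Suc m = x)"
    by (rule Least_Suc[of _ "Suc k"]) (use k False in auto)
  with False show ?thesis unfolding pos_def by simp
qed

lemma pos_filter_less_iff:
  assumes "distinct w" "x \<in> set w" "y \<in> set w" "P x" "P y"
  shows "pos (filter P w) x < pos (filter P w) y \<longleftrightarrow> pos w x < pos w y"
  using assms
proof (induction w)
  case (Cons z w)
  then show ?case by (cases "z = x \<or> z = y") (auto simp: pos_Cons)
qed simp

lemma inverse_descent_filter: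
  assumes "distinct w" "m \<in> set (filter P w)" "Suc m \<in> set (filter P w)"
  shows "inverse_descent (filter P w) m \<longleftrightarrow> inverse_descent w m"
  using assms pos_filter_less_iff[of w "Suc m" m P] by (simp add: inverse_descent_def)

lemma pos_map_swap_letters:
  assumes "m \<noteq> b" "m \<noteq> c"
  shows "pos (map (swap_letters b c) w) m = pos w m"
proof -
  have "(\<lambda>k. k < length (map (swap_letters b c) w) \<and> map (swap_letters b c) w ! k = m)
      = (\<lambda>k. k < length w \<and> w ! k = m)"
    using assms by (intro ext) (auto simp: swap_letters_def split: if_splits)
  then show ?thesis unfolding pos_def by simp
qed

lemma inverse_descent_map_swap_letters:
  assumes "m \<notin> {b, c}" "Suc m \<notin> {b, c}"
  shows "inverse_descent (map (swap_letters b c) w) m \<longleftrightarrow> inverse_descent w m"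
  using assms by (simp add: inverse_descent_def pos_map_swap_letters)

lemma cc_moved_inverse_descent:
  assumes "2 \<le> e" "e - 1 \<in> inverse_descents w" "e \<notin> inverse_descents w"
    and "inverse_descents w' = insert e (inverse_descents w - {e - 1})"
  shows "cc w k = cc w' k + of_bool (k = e)"
proof -
  have step: "of_bool (Suc i = e) + of_bool (inverse_descent w (Suc i))
      = of_bool (inverse_descent w' (Suc i)) + (of_bool (Suc (Suc i) = e) :: nat)" for i
    using assms by (auto simp: inverse_descents_def set_eq_iff)
  have "cc w (Suc i) = cc w' (Suc i) + of_bool (Suc i = e)" for i
  proof (induction i)
    case 0
    then show ?case using assms(1) by simp
  next
    case (Suc i)
    show ?case unfolding cc_Suc_Suc Suc.IH using step[of i] by linarith
  qed
  then show ?thesis using assms(1) by (cases k) auto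
qed

lemma cocharge_word_moved_inverse_descent:
  assumes "length w' = length w" "2 \<le> e" "e \<le> length w"
    and "e - 1 \<in> inverse_descents w" "e \<notin> inverse_descents w"
    and "inverse_descents w' = insert e (inverse_descents w - {e - 1})"
  shows "cocharge_word w = cocharge_word w' + 1"
proof -
  have "cocharge_word w = (\<Sum>k = 1..length w. cc w' k + of_bool (k = e))"
    unfolding cocharge_word_def using cc_moved_inverse_descent[OF assms(2,4-6)] by simp
  also have "\<dots> = cocharge_word w' + 1"
    using assms(1-3) by (simp add: sum.distrib cocharge_word_def)
  finally show ?thesis .
qed

lemma D_inverse_descents:
  assumes "j \<in> {1..4}" "D j a = (s, s')" "e = (if j \<le> 2 then a + 1 else a + 2)"
  shows "e - 1 \<in> inverse_descents s" "e \<notin> inverse_descents s"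
    and "m \<in> {a, a + 1, a + 2} \<Longrightarrow>
           m \<in> inverse_descents s' \<longleftrightarrow> m \<in> insert e (inverse_descents s - {e - 1})"
  using assms
  by (auto simp: numeral_eq_Suc atLeastAtMostSuc_conv D_def Let_def
      inverse_descents_def inverse_descent_def pos_Cons)

lemma set_D: "set (fst (D j a)) = {a..a + 3}" "set (snd (D j a)) = {a..a + 3}"
  by (auto simp: D_def Let_def)

lemma cocharge_word_swap_D:
  assumes "distinct w" "distinct w'" "set w = {1..length w}" "1 \<le> a" "j \<in> {1..4}"
    and "w = map (swap_letters (a + 1) (a + 2)) w'"
    and "(subword a w, subword a w') = D j a"
  shows "cocharge_word w = cocharge_word w' + 1"
proof -
  define e where "e = (if j \<le> 2 then a + 1 else a + 2)"
  define s s' where "s = subword a w" and "s' = subword a w'"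
  have D: "D j a = (s, s')" using assms(7) by (simp add: s_def s'_def)
  have window: "inverse_descent w m \<longleftrightarrow> inverse_descent s m"
    "inverse_descent w' m \<longleftrightarrow> inverse_descent s' m" if "m \<in> {a, a + 1, a + 2}" for m
  proof -
    have "m \<in> set s" "Suc m \<in> set s" "m \<in> set s'" "Suc m \<in> set s'"
      using that set_D[of j a] D by auto
    then show "inverse_descent w m \<longleftrightarrow> inverse_descent s m"
      "inverse_descent w' m \<longleftrightarrow> inverse_descent s' m"
      unfolding s_def s'_def subword_def
      using assms(1,2) by (simp_all only: inverse_descent_filter)
  qed
  have outside: "inverse_descent w m \<longleftrightarrow> inverse_descent w' m" if "m \<notin> {a, a + 1, a + 2}" for m
    using that assms(6) inverse_descent_map_swap_letters[of m "a + 1" "a + 2" w'] by auto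
  have e_window: "e \<in> {a, a + 1, a + 2}" "e - 1 \<in> {a, a + 1, a + 2}"
    using assms(4) by (auto simp: e_def)
  note moved = D_inverse_descents[OF assms(5) D e_def]
  have "e \<in> set w"
    using set_D[of j a] D assms(4) by (auto simp: e_def s_def subword_def)
  then have "e \<le> length w" using assms(3) by auto
  moreover have "inverse_descents w' = insert e (inverse_descents w - {e - 1})"
  proof (intro set_eqI)
    fix m
    show "m \<in> inverse_descents w' \<longleftrightarrow> m \<in> insert e (inverse_descents w - {e - 1})"
    proof (cases "m \<in> {a, a + 1, a + 2}")
      case True
      then show ?thesis using moved(3)[OF True] window[OF True] by (auto simp: inverse_descents_def)
    next
      case False
      then show ?thesis using outside[OF False] e_window by (auto simp: inverse_descents_def)
    qed
  qed
  moreover have "e - 1 \<in> inverse_descents w" "e \<notin> inverse_descents w"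
    using moved(1,2) window e_window by (auto simp: inverse_descents_def)
  moreover have "length w' = length w" "2 \<le> e"
    using assms(4,6) by (auto simp: e_def)
  ultimately show ?thesis by (intro cocharge_word_moved_inverse_descent)
qed

theorem lemma23:
  fixes T T' :: tableau and i j :: nat
  assumes "standard T" and "standard T'"
    and "1 \<le> i" and "1 \<le> j" and "j \<le> 4"
    and "pair_of_type j i T T'"
  shows "\<forall>N x q t. digamma T N x q t = q * digamma T' N x q t"
proof -
  have "cocharge T = cocharge T' + 1"
    unfolding cocharge_def
  proof (rule cocharge_word_swap_D)
    show "distinct (rword T)" "distinct (rword T')" "set (rword T) = {1..length (rword T)}"
      using assms(1,2) by (simp_all add: standard_def)
    show "rword T = map (swap_letters (i + 1) (i + 2)) (rword T')"
      "(subword i (rword T), subword i (rword T')) = D j i"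
      using assms(6) unfolding pair_of_type_def by blast+
  qed (use assms(3-5) in auto)
  moreover have "shape T = shape T'"
    using assms(6) by (simp add: pair_of_type_def)
  ultimately show ?thesis by (simp add: digamma_def)
qed

end
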